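(* Fix $\varepsilon>0$. Let $G^p_n$ be drawn from $G(n,n,p)$ with $p=\omega(n^{-1/2}\log^{1/2} n)$, and let $i_t(G^p_n)$ denote the number of independent sets of size $t$ in $G^p_n$. Then with probability tending to $1$ as $n\to\infty$, the sequence $(i_t(G^p_n))_{t=[\varepsilon n]}^{n}$ is unimodal with mode $n/2$, and moreover is log-concave.
   Context: $G(n,n,p)$ is the probability distribution on bipartite graphs with a fixed bipartition $\mathcal{E}\cup\mathcal{O}$, $|\mathcal{E}|=|\mathcal{O}|=n$, in which each of the $n^2$ pairs in $\mathcal{E}\times\mathcal{O}$ is an edge independently with probability $p=p(n)$. $p=\omega(f(n))$ means $p/f(n)\to\infty$. A sequence $(a_t)_{t=m}^{n}$ is unimodal with mode $k$ if $a_m\le\dots\le a_k\ge\dots\ge a_n$; it is log-concave if $a_k^2\ge a_{k-1}a_{k+1}$ for all $m<k<n$. $[y]$ denotes the integer part of $y$. *)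

theory Defs
  imports "HOL-Probability.Probability"
begin

text \<open>Bipartite graphs on the fixed bipartition E \<union> O, with E = Inl ` {..<n} and
  O = Inr ` {..<n}.  A graph is given by its edge set, a subset of {..<n} \<times> {..<n}:
  the pair (i,j) stands for the edge between Inl i \<in> E and Inr j \<in> O.\<close>

definition bip_vertices :: "nat \<Rightarrow> (nat + nat) set" where
  "bip_vertices n = Inl ` {..<n} \<union> Inr ` {..<n}"

definition Gnnp :: "nat \<Rightarrow> real \<Rightarrow> (nat \<times> nat) set pmf" where
  "Gnnp n p = map_pmf (\<lambda>f. {e \<in> {..<n} \<times> {..<n}. f e})
     (Pi_pmf ({..<n} \<times> {..<n}) False (\<lambda>_. bernoulli_pmf p))"

definition indep_set :: "nat \<Rightarrow> (nat \<times> nat) set \<Rightarrow> (nat + nat) set \<Rightarrow> bool" where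
  "indep_set n Eg S \<longleftrightarrow> S \<subseteq> bip_vertices n \<and>
     (\<forall>i j. Inl i \<in> S \<and> Inr j \<in> S \<longrightarrow> (i, j) \<notin> Eg)"

definition num_indep :: "nat \<Rightarrow> (nat \<times> nat) set \<Rightarrow> nat \<Rightarrow> nat" where
  "num_indep n Eg t = card {S. indep_set n Eg S \<and> card S = t}"

text \<open>(a_t) for t = m..N is nondecreasing up to index k1 and nonincreasing from index k2
  (mode n/2 is rendered with k1 = n div 2, k2 = (n+1) div 2).\<close>
definition unimodal_range :: "nat \<Rightarrow> nat \<Rightarrow> nat \<Rightarrow> nat \<Rightarrow> (nat \<Rightarrow> real) \<Rightarrow> bool" where
  "unimodal_range m N k1 k2 a \<longleftrightarrow>
     (\<forall>t. m \<le> t \<and> t < k1 \<and> t < N \<longrightarrow> a t \<le> a (Suc t)) \<and>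
     (\<forall>t. m \<le> t \<and> k2 \<le> t \<and> t < N \<longrightarrow> a (Suc t) \<le> a t)"

definition log_concave_range :: "nat \<Rightarrow> nat \<Rightarrow> (nat \<Rightarrow> real) \<Rightarrow> bool" where
  "log_concave_range m N a \<longleftrightarrow> (\<forall>k. m < k \<and> k < N \<longrightarrow> a (k - 1) * a (k + 1) \<le> (a k)\<^sup>2)"

end

theory Submission
  imports Defs "HOL-Real_Asymp.Real_Asymp"
begin

text \<open>An independent set of size t either lies inside one side of the bipartition (there are
  2 (n choose t) of these in every graph) or is mixed: it meets both sides in nonempty sets A, B
  with no edge between them. A mixed pair with k = min |A| |B| survives with probability
  (1 - p)^(|A| |B|) \<le> exp (- p k t / 2), and there are at most n^(2k) (n choose t) such pairs, so for
  t \<ge> \<epsilon> n and p n \<gg> ln n the expected number of mixed independent sets is a tiny fraction of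
  (n choose t). Markov's inequality and a union bound over t show that with high probability
  2 (n choose t) \<le> i_t \<le> 2 (1 + 1/n) (n choose t) for all t \<ge> \<epsilon> n, and this window is narrow enough
  for unimodality (mode n/2) and log-concavity of the binomial coefficients to pass to i_t.\<close>

lemma prob_Gnnp_no_edges_between:
  assumes "A \<subseteq> {..<n}" "B \<subseteq> {..<n}" "0 \<le> p" "p \<le> 1"
  shows "measure_pmf.prob (Gnnp n p) {Eg. \<forall>i\<in>A. \<forall>j\<in>B. (i, j) \<notin> Eg} = (1 - p) ^ (card A * card B)"
proof -
  define G where "G = {..<n} \<times> {..<n}"
  define Bs where "Bs e = (if e \<in> A \<times> B then {False} else UNIV)" for e
  have "finite G" by (simp add: G_def)
  have AB: "A \<times> B \<subseteq> G" using assms(1,2) by (auto simp: G_def)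
  have pre: "(\<lambda>f. {e \<in> {..<n} \<times> {..<n}. f e}) -` {Eg. \<forall>i\<in>A. \<forall>j\<in>B. (i, j) \<notin> Eg} = Pi G Bs"
    using assms(1,2) by (auto simp: G_def Bs_def Pi_def)
  have "measure_pmf.prob (Gnnp n p) {Eg. \<forall>i\<in>A. \<forall>j\<in>B. (i, j) \<notin> Eg}
      = measure_pmf.prob (Pi_pmf G False (\<lambda>_. bernoulli_pmf p)) (Pi G Bs)"
    unfolding Gnnp_def measure_map_pmf pre G_def ..
  also have "\<dots> = (\<Prod>e\<in>G. measure_pmf.prob (bernoulli_pmf p) (Bs e))"
    by (rule measure_Pi_pmf_Pi[OF \<open>finite G\<close>])
  also have "\<dots> = (\<Prod>e\<in>G. if e \<in> A \<times> B then 1 - p else 1)"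
    using assms(3,4) by (intro prod.cong refl) (auto simp: Bs_def measure_pmf_single)
  also have "\<dots> = (\<Prod>e\<in>A \<times> B. 1 - p)"
    using \<open>finite G\<close> by (subst prod.If_cases) (simp_all add: Int_absorb1[OF AB])
  finally show ?thesis by (simp add: card_cartesian_product)
qed

lemma finite_set_pmf_Gnnp: "finite (set_pmf (Gnnp n p))"
  by (rule finite_subset[of _ "Pow ({..<n} \<times> {..<n})"]) (auto simp: Gnnp_def)

definition subsets_card :: "nat \<Rightarrow> nat \<Rightarrow> nat set set" where
  "subsets_card n k = {A. A \<subseteq> {..<n} \<and> card A = k}"

lemma finite_subsets_card: "finite (subsets_card n k)"
  by (rule finite_subset[of _ "Pow {..<n}"]) (auto simp: subsets_card_def)

lemma card_subsets_card: "card (subsets_card n k) = n choose k"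
  using n_subsets[of "{..<n}" k] by (simp add: subsets_card_def)

text \<open>The pair (A, B) stands for the vertex set Inl ` A \<union> Inr ` B, which meets both sides.\<close>

definition mixed_pairs :: "nat \<Rightarrow> nat \<Rightarrow> (nat set \<times> nat set) set" where
  "mixed_pairs n t =
     {(A, B). A \<subseteq> {..<n} \<and> B \<subseteq> {..<n} \<and> A \<noteq> {} \<and> B \<noteq> {} \<and> card A + card B = t}"

definition mixed_indep :: "nat \<Rightarrow> (nat \<times> nat) set \<Rightarrow> nat \<Rightarrow> (nat set \<times> nat set) set" where
  "mixed_indep n Eg t = {(A, B) \<in> mixed_pairs n t. \<forall>i\<in>A. \<forall>j\<in>B. (i, j) \<notin> Eg}"

lemma mixed_pairs_eq_UN:
  "mixed_pairs n t = (\<Union>a\<in>{1..<t}. subsets_card n a \<times> subsets_card n (t - a))"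
proof safe
  fix A B assume "(A, B) \<in> mixed_pairs n t"
  then have AB: "A \<subseteq> {..<n}" "B \<subseteq> {..<n}" "A \<noteq> {}" "B \<noteq> {}" "card A + card B = t"
    by (auto simp: mixed_pairs_def)
  then have "finite A" "finite B" by (auto intro: finite_subset)
  with AB have "card A \<ge> 1" "card B \<ge> 1" by (auto simp: Suc_le_eq card_gt_0_iff)
  with AB show "(A, B) \<in> (\<Union>a\<in>{1..<t}. subsets_card n a \<times> subsets_card n (t - a))"
    by (auto simp: subsets_card_def intro!: bexI[of _ "card A"])
qed (auto simp: subsets_card_def mixed_pairs_def)

lemma finite_mixed_pairs: "finite (mixed_pairs n t)"
  by (simp add: mixed_pairs_eq_UN finite_subsets_card)

lemma finite_mixed_indep: "finite (mixed_indep n Eg t)"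
  unfolding mixed_indep_def by (rule finite_subset[OF _ finite_mixed_pairs]) auto

lemma finite_indep_sets: "finite {S. indep_set n Eg S \<and> card S = t}"
  by (rule finite_subset[of _ "Pow (bip_vertices n)"]) (auto simp: indep_set_def bip_vertices_def)

lemma two_binomial_le_num_indep:
  assumes "1 \<le> t"
  shows "2 * (n choose t) \<le> num_indep n Eg t"
proof -
  let ?K = "subsets_card n t"
  have inj: "inj_on (\<lambda>A. Inl ` A :: (nat + nat) set) ?K" "inj_on (\<lambda>A. Inr ` A :: (nat + nat) set) ?K"
    by (auto intro!: inj_onI simp: inj_image_eq_iff)
  have "(\<lambda>A. Inl ` A) ` ?K \<inter> (\<lambda>A. Inr ` A) ` ?K = {}"
  proof safe
    fix A B assume "A \<in> ?K" and eq: "Inl ` A = (Inr ` B :: (nat + nat) set)"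
    with assms obtain a where "a \<in> A" by (fastforce simp: subsets_card_def)
    with eq show "Inl ` A \<in> {}" by blast
  qed
  then have "2 * (n choose t) = card ((\<lambda>A. Inl ` A) ` ?K \<union> (\<lambda>A. Inr ` A) ` ?K)"
    using inj by (simp add: card_Un_disjoint finite_subsets_card card_image card_subsets_card)
  also have "\<dots> \<le> num_indep n Eg t"
    unfolding num_indep_def
    by (rule card_mono[OF finite_indep_sets])
       (auto simp: subsets_card_def indep_set_def bip_vertices_def card_image)
  finally show ?thesis .
qed

lemma indep_set_sides:
  assumes "indep_set n Eg S"
  shows "Inl -` S \<subseteq> {..<n}" and "Inr -` S \<subseteq> {..<n}"
    and "card S = card (Inl -` S) + card (Inr -` S)"
    and "\<forall>i\<in>Inl -` S. \<forall>j\<in>Inr -` S. (i, j) \<notin> Eg"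
proof -
  show sub: "Inl -` S \<subseteq> {..<n}" "Inr -` S \<subseteq> {..<n}"
    using assms by (auto simp: indep_set_def bip_vertices_def)
  show "\<forall>i\<in>Inl -` S. \<forall>j\<in>Inr -` S. (i, j) \<notin> Eg"
    using assms by (simp add: indep_set_def)
  have S_eq: "S = Inl ` (Inl -` S) \<union> Inr ` (Inr -` S)"
  proof (rule set_eqI)
    show "x \<in> S \<longleftrightarrow> x \<in> Inl ` (Inl -` S) \<union> Inr ` (Inr -` S)" for x
      by (cases x) auto
  qed
  from sub have "finite (Inl -` S)" "finite (Inr -` S)"
    by (auto intro: finite_subset)
  then have "card (Inl ` (Inl -` S) \<union> Inr ` (Inr -` S)) = card (Inl -` S) + card (Inr -` S)"
    by (subst card_Un_disjoint) (auto simp: card_image simp del: image_vimage_eq)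
  with arg_cong[OF S_eq, of card] show "card S = card (Inl -` S) + card (Inr -` S)"
    by (rule trans)
qed

lemma num_indep_le: "num_indep n Eg t \<le> 2 * (n choose t) + card (mixed_indep n Eg t)"
proof -
  let ?K = "subsets_card n t"
  define split where "split S = (Inl -` S, Inr -` S)" for S :: "(nat + nat) set"
  define D where "D = (\<lambda>A. (A, {})) ` ?K \<union> (\<lambda>B. ({}, B)) ` ?K \<union> mixed_indep n Eg t"
  have "inj_on split {S. indep_set n Eg S \<and> card S = t}"
  proof (rule inj_onI)
    fix S T assume "split S = split T"
    then have "x \<in> S \<longleftrightarrow> x \<in> T" for x by (cases x) (auto simp: split_def)
    then show "S = T" by blast
  qed
  moreover have "split ` {S. indep_set n Eg S \<and> card S = t} \<subseteq> D"
  proof (rule image_subsetI)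
    fix S assume "S \<in> {S. indep_set n Eg S \<and> card S = t}"
    then have "indep_set n Eg S" and card: "card (Inl -` S) + card (Inr -` S) = t"
      using indep_set_sides(3) by auto
    note sides = indep_set_sides[OF this(1)]
    consider "Inl -` S = {}" | "Inr -` S = {}" | "Inl -` S \<noteq> {}" "Inr -` S \<noteq> {}" by blast
    then show "split S \<in> D"
    proof cases
      case 1
      with sides card show ?thesis by (simp add: D_def split_def subsets_card_def)
    next
      case 2
      with sides card show ?thesis by (simp add: D_def split_def subsets_card_def)
    next
      case 3
      with sides card show ?thesis by (simp add: D_def split_def mixed_indep_def mixed_pairs_def)
    qed
  qed
  moreover have "finite D"
    by (simp add: D_def finite_subsets_card finite_mixed_indep)
  ultimately have "num_indep n Eg t \<le> card D"
    unfolding num_indep_def by (rule card_inj_on_le)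
  also have "\<dots> \<le> card ((\<lambda>A. (A, {} :: nat set)) ` ?K) + card ((\<lambda>B. ({} :: nat set, B)) ` ?K)
      + card (mixed_indep n Eg t)"
    unfolding D_def by (intro order_trans[OF card_Un_le] add_right_mono card_Un_le)
  also have "\<dots> \<le> 2 * (n choose t) + card (mixed_indep n Eg t)"
    using card_image_le[OF finite_subsets_card, of "\<lambda>A. (A, {} :: nat set)" n t]
      card_image_le[OF finite_subsets_card, of "\<lambda>B. ({} :: nat set, B)" n t]
    by (simp add: card_subsets_card)
  finally show ?thesis .
qed

lemma binomial_Suc_mult: "(n choose Suc k) * Suc k = (n choose k) * (n - k)"
  by (metis binomial_absorb_comp binomial_absorption mult.commute)

lemma binomial_Suc_mult_real:
  assumes "k \<le> n"
  shows "real (n choose Suc k) * (real k + 1) = real (n choose k) * (real n - real k)"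
proof -
  have "real ((n choose Suc k) * Suc k) = real ((n choose k) * (n - k))"
    by (simp only: binomial_Suc_mult)
  with assms show ?thesis
    by (simp add: of_nat_diff algebra_simps)
qed

lemma binomial_le_pow_mult_binomial_add: "a + b \<le> n \<Longrightarrow> n choose b \<le> n ^ a * (n choose (a + b))"
proof (induction a)
  case (Suc a)
  have "n choose b \<le> n ^ a * (n choose (a + b))"
    using Suc by simp
  also have "n choose (a + b) \<le> n * (n choose Suc (a + b))"
  proof -
    have "n choose (a + b) \<le> (n choose (a + b)) * (n - (a + b))"
      using Suc.prems by simp
    also have "\<dots> = (n choose Suc (a + b)) * Suc (a + b)"
      by (rule binomial_Suc_mult[symmetric])
    also have "\<dots> \<le> (n choose Suc (a + b)) * n"
      using Suc.prems by (intro mult_left_mono) auto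
    finally show ?thesis by (simp add: mult.commute)
  qed
  finally show ?case by (simp add: mult_ac)
qed simp

lemma binomial_mult_binomial_le:
  assumes "a + b \<le> n"
  shows "(n choose a) * (n choose b) \<le> n ^ (2 * min a b) * (n choose (a + b))"
proof -
  have *: "(n choose x) * (n choose y) \<le> n ^ (2 * x) * (n choose (x + y))" if "x + y \<le> n" for x y
  proof -
    have "(n choose x) * (n choose y) \<le> n ^ x * (n ^ x * (n choose (x + y)))"
      using that by (intro mult_mono binomial_le_pow binomial_le_pow_mult_binomial_add) auto
    then show ?thesis by (simp add: power_add mult_2 mult.assoc)
  qed
  show ?thesis
    using *[of a b] *[of b a] assms by (cases "a \<le> b") (simp_all add: min_def mult.commute add.commute)
qed

lemma binomial_Suc_ge:
  assumes "2 * Suc k \<le> n"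
  shows "(1 + 1 / real n) * real (n choose k) \<le> real (n choose Suc k)"
proof -
  have "(1 + 1 / real n) * (real k + 1) \<le> real k + 2"
    using assms by (simp add: field_simps)
  also have "\<dots> \<le> real n - real k"
  proof -
    have "real (2 * Suc k) \<le> real n" using assms by (simp only: of_nat_le_iff)
    then show ?thesis by simp
  qed
  finally have "real (n choose k) * ((1 + 1 / real n) * (real k + 1)) \<le> real (n choose k) * (real n - real k)"
    by (rule mult_left_mono) simp
  also have "\<dots> = real (n choose Suc k) * (real k + 1)"
    using assms by (simp add: binomial_Suc_mult_real)
  finally have "((1 + 1 / real n) * real (n choose k)) * (real k + 1) \<le> real (n choose Suc k) * (real k + 1)"
    by (simp add: mult_ac)
  then show ?thesis by (simp add: mult_le_cancel_right)
qed

lemma binomial_Suc_le: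
  assumes "n \<le> 2 * k" "k < n"
  shows "(1 + 1 / real n) * real (n choose Suc k) \<le> real (n choose k)"
proof -
  have "real n \<le> real (2 * k)"
    using assms(1) by (simp only: of_nat_le_iff)
  moreover have "(real n - real k) / real n \<le> 1"
    using assms by simp
  ultimately have "(1 + 1 / real n) * (real n - real k) \<le> real k + 1"
    by (simp add: distrib_right)
  then have "real (n choose Suc k) * ((1 + 1 / real n) * (real n - real k))
      \<le> real (n choose Suc k) * (real k + 1)"
    by (rule mult_left_mono) simp
  also have "\<dots> = real (n choose k) * (real n - real k)"
    using assms by (simp add: binomial_Suc_mult_real)
  finally have "((1 + 1 / real n) * real (n choose Suc k)) * (real n - real k) \<le> real (n choose k) * (real n - real k)"
    by (simp add: mult_ac)
  then show ?thesis using assms by (simp add: mult_le_cancel_right)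
qed

lemma binomial_log_concave:
  assumes "0 < k" "k < n"
  shows "(1 + 1 / real n)\<^sup>2 * (real (n choose (k - 1)) * real (n choose (k + 1))) \<le> (real (n choose k))\<^sup>2"
proof -
  let ?f = "1 + 1 / real n" and ?w = "(real k + 1) * (real n - real k + 1)"
  have lower: "real (n choose (k - 1)) * (real n - real k + 1) = real (n choose k) * real k"
    using binomial_Suc_mult_real[of "k - 1" n] assms by (simp add: of_nat_diff algebra_simps)
  have upper: "real (n choose (k + 1)) * (real k + 1) = real (n choose k) * (real n - real k)"
    using binomial_Suc_mult_real[of k n] assms by simp
  have "?f * real k \<le> real k + 1" "?f * (real n - real k) \<le> real n - real k + 1"
    using assms by (simp_all add: field_simps)
  then have "(?f * real k) * (?f * (real n - real k)) \<le> ?w"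
    using assms by (intro mult_mono) auto
  then have ratio: "?f\<^sup>2 * (real k * (real n - real k)) \<le> ?w"
    by (simp add: power2_eq_square mult_ac)
  have "?f\<^sup>2 * (real (n choose (k - 1)) * real (n choose (k + 1))) * ?w
      = (real (n choose k))\<^sup>2 * (?f\<^sup>2 * (real k * (real n - real k)))"
    using lower upper by (simp add: power2_eq_square) (metis (no_types, lifting) mult.commute mult.left_commute)
  also have "\<dots> \<le> (real (n choose k))\<^sup>2 * ?w"
    using ratio by (simp add: mult_left_mono)
  finally show ?thesis using assms by (simp add: mult_le_cancel_right)
qed

lemma unimodal_range_near_binomial:
  fixes a :: "nat \<Rightarrow> real"
  assumes "0 \<le> c"
    and near: "\<And>t. m \<le> t \<Longrightarrow> t \<le> n \<Longrightarrow>
      c * real (n choose t) \<le> a t \<and> a t \<le> (1 + 1 / real n) * c * real (n choose t)"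
  shows "unimodal_range m n (n div 2) ((n + 1) div 2) a"
proof -
  have up: "a t \<le> a (Suc t)" if "m \<le> t" "t < n div 2" for t
  proof -
    have "a t \<le> c * ((1 + 1 / real n) * real (n choose t))"
      using near[of t] that by (simp add: mult_ac)
    also have "\<dots> \<le> c * real (n choose Suc t)"
      using that \<open>0 \<le> c\<close> by (intro mult_left_mono binomial_Suc_ge) auto
    also have "\<dots> \<le> a (Suc t)"
      using near[of "Suc t"] that by simp
    finally show ?thesis .
  qed
  have down: "a (Suc t) \<le> a t" if "m \<le> t" "(n + 1) div 2 \<le> t" "t < n" for t
  proof -
    have "a (Suc t) \<le> c * ((1 + 1 / real n) * real (n choose Suc t))"
      using near[of "Suc t"] that by (simp add: mult_ac)
    also have "\<dots> \<le> c * real (n choose t)"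
      using that \<open>0 \<le> c\<close> by (intro mult_left_mono binomial_Suc_le) auto
    also have "\<dots> \<le> a t"
      using near[of t] that by simp
    finally show ?thesis .
  qed
  show ?thesis
    unfolding unimodal_range_def using up down by auto
qed

lemma log_concave_range_near_binomial:
  fixes a :: "nat \<Rightarrow> real"
  assumes "0 \<le> c"
    and near: "\<And>t. m \<le> t \<Longrightarrow> t \<le> n \<Longrightarrow>
      c * real (n choose t) \<le> a t \<and> a t \<le> (1 + 1 / real n) * c * real (n choose t)"
  shows "log_concave_range m n a"
  unfolding log_concave_range_def
proof safe
  fix k assume k: "m < k" "k < n"
  let ?f = "1 + 1 / real n"
  have "a (k - 1) * a (k + 1) \<le> (?f * c * real (n choose (k - 1))) * (?f * c * real (n choose (k + 1)))"
  proof (rule mult_mono)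
    show "0 \<le> ?f * c * real (n choose (k - 1))"
      using \<open>0 \<le> c\<close> by simp
    have "c * real (n choose (k + 1)) \<le> a (k + 1)"
      using near[of "k + 1"] k by simp
    moreover have "0 \<le> c * real (n choose (k + 1))"
      using \<open>0 \<le> c\<close> by simp
    ultimately show "0 \<le> a (k + 1)"
      by linarith
  qed (use near[of "k - 1"] near[of "k + 1"] k in simp_all)
  also have "\<dots> = c\<^sup>2 * (?f\<^sup>2 * (real (n choose (k - 1)) * real (n choose (k + 1))))"
    by (simp add: power2_eq_square mult_ac)
  also have "\<dots> \<le> c\<^sup>2 * (real (n choose k))\<^sup>2"
    using k by (intro mult_left_mono binomial_log_concave) auto
  also have "\<dots> \<le> (a k)\<^sup>2"
    using near[of k] k \<open>0 \<le> c\<close> by (simp add: power_mult_distrib[symmetric] power_mono)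
  finally show "a (k - 1) * a (k + 1) \<le> (a k)\<^sup>2" .
qed

lemma unimodal_log_concave_num_indep:
  assumes "1 \<le> m"
    and few: "\<forall>t\<in>{m..n}. real (card (mixed_indep n Eg t)) < 2 * real (n choose t) / real n"
  defines "a \<equiv> \<lambda>t. real (num_indep n Eg t)"
  shows "unimodal_range m n (n div 2) ((n + 1) div 2) a \<and> log_concave_range m n a"
proof -
  have near: "2 * real (n choose t) \<le> a t \<and> a t \<le> (1 + 1 / real n) * 2 * real (n choose t)"
    if t: "m \<le> t" "t \<le> n" for t
  proof -
    have "2 * real (n choose t) \<le> a t"
      using two_binomial_le_num_indep[of t n Eg] t assms(1) unfolding a_def by linarith
    moreover have "a t \<le> 2 * real (n choose t) + real (card (mixed_indep n Eg t))"
      using num_indep_le[of n Eg t] unfolding a_def by linarith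
    moreover have "real (card (mixed_indep n Eg t)) \<le> 2 * real (n choose t) / real n"
      using few t by (simp add: less_imp_le)
    ultimately show ?thesis
      by (simp add: algebra_simps)
  qed
  show ?thesis
    using unimodal_range_near_binomial[of 2, OF _ near] log_concave_range_near_binomial[of 2, OF _ near]
    by simp
qed

lemma one_minus_pow_mult_le:
  assumes "0 \<le> p" "p \<le> 1"
  shows "(1 - p) ^ (a * b) \<le> exp (- p * real (a + b) / 2) ^ min a b"
proof -
  have "min a b * (a + b) \<le> 2 * (a * b)"
  proof (cases "a \<le> b")
    case True
    then have "a * a \<le> a * b" by simp
    with True show ?thesis by (simp add: min_def algebra_simps)
  next
    case False
    then have "b * b \<le> b * a" by simp
    with False show ?thesis by (simp add: min_def algebra_simps)
  qed
  then have "real (min a b * (a + b)) \<le> real (2 * (a * b))"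
    by (simp only: of_nat_le_iff)
  then have "p * (real (min a b) * real (a + b) / 2) \<le> p * real (a * b)"
    using assms(1) by (intro mult_left_mono) simp_all
  have "(1 - p) ^ (a * b) \<le> exp (- p) ^ (a * b)"
    using assms by (intro power_mono) (auto simp: exp_ge_add_one_self[of "-p", simplified])
  also have "\<dots> = exp (- p * real (a * b))"
    by (simp add: exp_of_nat_mult[symmetric] mult.commute)
  also have "\<dots> \<le> exp (- p * (real (min a b) * real (a + b) / 2))"
    using \<open>p * (real (min a b) * real (a + b) / 2) \<le> p * real (a * b)\<close> by simp
  also have "\<dots> = exp (- p * real (a + b) / 2) ^ min a b"
    by (simp add: exp_of_nat_mult[symmetric] field_simps)
  finally show ?thesis .
qed

lemma mixed_pair_term_le:
  assumes "0 \<le> p" "p \<le> 1" "a + b \<le> n"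
  shows "real (n choose a) * real (n choose b) * (1 - p) ^ (a * b)
    \<le> real (n choose (a + b)) * (real n ^ 2 * exp (- p * real (a + b) / 2)) ^ min a b"
proof -
  have "real ((n choose a) * (n choose b)) \<le> real (n ^ (2 * min a b) * (n choose (a + b)))"
    using binomial_mult_binomial_le[OF assms(3)] by (simp only: of_nat_le_iff)
  then have "real (n choose a) * real (n choose b) * (1 - p) ^ (a * b)
      \<le> real n ^ (2 * min a b) * real (n choose (a + b)) * exp (- p * real (a + b) / 2) ^ min a b"
    using assms by (intro mult_mono[OF _ one_minus_pow_mult_le]) simp_all
  then show ?thesis by (simp add: power_mult power_mult_distrib mult_ac)
qed

lemma expectation_card_mixed_indep:
  assumes "0 \<le> p" "p \<le> 1"
  shows "measure_pmf.expectation (Gnnp n p) (\<lambda>Eg. real (card (mixed_indep n Eg t)))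
       = (\<Sum>(A, B)\<in>mixed_pairs n t. (1 - p) ^ (card A * card B))"
proof -
  have card_eq: "real (card (mixed_indep n Eg t))
      = (\<Sum>x\<in>mixed_pairs n t. indicator {Eg. x \<in> mixed_indep n Eg t} Eg)" for Eg
  proof -
    have "mixed_indep n Eg t = mixed_pairs n t \<inter> mixed_indep n Eg t"
      by (auto simp: mixed_indep_def)
    then have "real (card (mixed_indep n Eg t)) = (\<Sum>x\<in>mixed_pairs n t \<inter> mixed_indep n Eg t. 1)"
      by (metis real_of_card)
    also have "\<dots> = (\<Sum>x\<in>mixed_pairs n t. indicator (mixed_indep n Eg t) x)"
      unfolding sum.inter_restrict[OF finite_mixed_pairs] indicator_def of_bool_def ..
    finally show ?thesis
      by (simp add: indicator_def)
  qed
  have "measure_pmf.expectation (Gnnp n p) (\<lambda>Eg. real (card (mixed_indep n Eg t)))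
      = (\<Sum>x\<in>mixed_pairs n t. measure_pmf.prob (Gnnp n p) {Eg. x \<in> mixed_indep n Eg t})"
    unfolding card_eq
    by (subst Bochner_Integration.integral_sum)
       (simp_all add: integrable_measure_pmf_finite finite_set_pmf_Gnnp)
  also have "\<dots> = (\<Sum>(A, B)\<in>mixed_pairs n t. (1 - p) ^ (card A * card B))"
  proof (intro sum.cong refl, clarify)
    fix A B assume AB: "(A, B) \<in> mixed_pairs n t"
    then have "{Eg. (A, B) \<in> mixed_indep n Eg t} = {Eg. \<forall>i\<in>A. \<forall>j\<in>B. (i, j) \<notin> Eg}"
      by (auto simp: mixed_indep_def)
    moreover have "A \<subseteq> {..<n}" "B \<subseteq> {..<n}"
      using AB by (auto simp: mixed_pairs_def)
    ultimately show "measure_pmf.prob (Gnnp n p) {Eg. (A, B) \<in> mixed_indep n Eg t} = (1 - p) ^ (card A * card B)"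
      using prob_Gnnp_no_edges_between assms by simp
  qed
  finally show ?thesis .
qed

lemma sum_mixed_pairs_eq:
  "(\<Sum>(A, B)\<in>mixed_pairs n t. (1 - p) ^ (card A * card B))
    = (\<Sum>a\<in>{1..<t}. real (n choose a) * real (n choose (t - a)) * (1 - p) ^ (a * (t - a)))"
proof -
  have "(\<Sum>(A, B)\<in>mixed_pairs n t. (1 - p) ^ (card A * card B))
      = (\<Sum>a\<in>{1..<t}. \<Sum>(A, B)\<in>subsets_card n a \<times> subsets_card n (t - a). (1 - p) ^ (card A * card B))"
    unfolding mixed_pairs_eq_UN
    by (rule sum.UNION_disjoint) (auto simp: finite_subsets_card subsets_card_def)
  also have "\<dots> = (\<Sum>a\<in>{1..<t}. sum (\<lambda>_. (1 - p) ^ (a * (t - a))) (subsets_card n a \<times> subsets_card n (t - a)))"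
    by (intro sum.cong refl) (auto simp: subsets_card_def)
  finally show ?thesis
    by (simp add: card_cartesian_product card_subsets_card)
qed

lemma sum_mixed_pairs_le:
  assumes "0 \<le> p" "p \<le> 1" "t \<le> n"
    and small: "real n ^ 2 * exp (- p * real t / 2) \<le> 1"
  shows "(\<Sum>(A, B)\<in>mixed_pairs n t. (1 - p) ^ (card A * card B))
    \<le> real t * real (n choose t) * (real n ^ 2 * exp (- p * real t / 2))"
proof -
  let ?Q = "real n ^ 2 * exp (- p * real t / 2)"
  have "real (n choose a) * real (n choose (t - a)) * (1 - p) ^ (a * (t - a)) \<le> real (n choose t) * ?Q"
    if "a \<in> {1..<t}" for a
  proof -
    have "real (n choose a) * real (n choose (t - a)) * (1 - p) ^ (a * (t - a))
        \<le> real (n choose t) * ?Q ^ min a (t - a)"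
      using mixed_pair_term_le[of p a "t - a" n] assms that by simp
    also have "\<dots> \<le> real (n choose t) * ?Q"
      using that small by (intro mult_left_mono power_decreasing[of 1, simplified]) auto
    finally show ?thesis .
  qed
  then have "(\<Sum>a\<in>{1..<t}. real (n choose a) * real (n choose (t - a)) * (1 - p) ^ (a * (t - a)))
      \<le> (\<Sum>a\<in>{1..<t}. real (n choose t) * ?Q)"
    by (rule sum_mono)
  also have "\<dots> \<le> real t * real (n choose t) * ?Q"
    by (simp add: mult.assoc mult_right_mono)
  finally show ?thesis
    by (simp only: sum_mixed_pairs_eq)
qed

lemma prob_many_mixed_indep_le:
  assumes "0 \<le> p" "p \<le> 1" "1 \<le> t" "t \<le> n"
    and small: "real n ^ 2 * exp (- p * real t / 2) \<le> 1"
  shows "measure_pmf.prob (Gnnp n p) {Eg. 2 * real (n choose t) / real n \<le> real (card (mixed_indep n Eg t))}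
    \<le> real n * real t * (real n ^ 2 * exp (- p * real t / 2)) / 2"
proof -
  let ?c = "2 * real (n choose t) / real n"
  have "?c > 0"
    using assms(3,4) by simp
  have "measure_pmf.prob (Gnnp n p) {Eg. ?c \<le> real (card (mixed_indep n Eg t))}
      \<le> measure_pmf.expectation (Gnnp n p) (\<lambda>Eg. real (card (mixed_indep n Eg t))) / ?c"
    using integral_Markov_inequality_measure[of "measure_pmf (Gnnp n p)" "\<lambda>Eg. real (card (mixed_indep n Eg t))" UNIV ?c]
    by (simp add: integrable_measure_pmf_finite finite_set_pmf_Gnnp \<open>?c > 0\<close>)
  also have "\<dots> \<le> real t * real (n choose t) * (real n ^ 2 * exp (- p * real t / 2)) / ?c"
    unfolding expectation_card_mixed_indep[OF assms(1,2)]
    using \<open>?c > 0\<close> assms by (intro divide_right_mono sum_mixed_pairs_le) auto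
  also have "\<dots> = real n * real t * (real n ^ 2 * exp (- p * real t / 2)) / 2"
    using assms(3,4) by (simp add: field_simps)
  finally show ?thesis .
qed

lemma prob_many_mixed_indep_le_inverse_square:
  assumes "0 \<le> p" "p \<le> 1" "1 \<le> m" "m \<le> t" "t \<le> n"
    and large: "6 * ln (real n) \<le> p * real m / 2"
  shows "measure_pmf.prob (Gnnp n p) {Eg. 2 * real (n choose t) / real n \<le> real (card (mixed_indep n Eg t))}
    \<le> 1 / (2 * real n ^ 2)"
proof -
  let ?Q = "real n ^ 2 * exp (- p * real t / 2)"
  have "exp (real 6 * ln (real n)) = exp (ln (real n)) ^ 6"
    by (rule exp_of_nat_mult)
  then have exp_ln: "exp (- (6 * ln (real n))) = 1 / real n ^ 6"
    using assms by (simp add: exp_minus inverse_eq_divide)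
  have "p * real m / 2 \<le> p * real t / 2"
    using assms(1,4) by (simp add: mult_left_mono)
  with large have "exp (- p * real t / 2) \<le> 1 / real n ^ 6"
    unfolding exp_ln[symmetric] by simp
  then have "?Q \<le> real n ^ 2 * (1 / real n ^ 6)"
    by (rule mult_left_mono) simp
  also have "\<dots> = 1 / real n ^ 4"
    using assms by (simp add: field_simps)
  finally have Q: "?Q \<le> 1 / real n ^ 4" .
  moreover have "1 / real n ^ 4 \<le> 1"
    using assms by simp
  ultimately have "?Q \<le> 1"
    by linarith
  then have "measure_pmf.prob (Gnnp n p) {Eg. 2 * real (n choose t) / real n \<le> real (card (mixed_indep n Eg t))}
      \<le> real n * real t * ?Q / 2"
    using assms by (intro prob_many_mixed_indep_le) auto
  also have "\<dots> \<le> real n * real n * (1 / real n ^ 4) / 2"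
    using assms Q by (intro divide_right_mono mult_mono) simp_all
  also have "\<dots> = 1 / (2 * real n ^ 2)"
    using assms by (simp add: field_simps power4_eq_xxxx power2_eq_square)
  finally show ?thesis .
qed

lemma prob_few_mixed_indep_ge:
  assumes "0 \<le> p" "p \<le> 1" "1 \<le> m" "1 \<le> n"
    and large: "6 * ln (real n) \<le> p * real m / 2"
  shows "1 - 1 / (2 * real n) \<le> measure_pmf.prob (Gnnp n p)
    {Eg. \<forall>t\<in>{m..n}. real (card (mixed_indep n Eg t)) < 2 * real (n choose t) / real n}"
proof -
  define Bad where
    "Bad t = {Eg. 2 * real (n choose t) / real n \<le> real (card (mixed_indep n Eg t))}" for t
  have "measure_pmf.prob (Gnnp n p) (\<Union>t\<in>{m..n}. Bad t)
      \<le> (\<Sum>t\<in>{m..n}. measure_pmf.prob (Gnnp n p) (Bad t))"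
    by (rule measure_pmf.finite_measure_subadditive_finite) auto
  also have "\<dots> \<le> (\<Sum>t\<in>{m..n}. 1 / (2 * real n ^ 2))"
    unfolding Bad_def using assms
    by (intro sum_mono prob_many_mixed_indep_le_inverse_square) auto
  also have "\<dots> \<le> real n * (1 / (2 * real n ^ 2))"
    using \<open>1 \<le> m\<close> by (simp only: sum_constant) (intro mult_right_mono; simp)
  also have "\<dots> = 1 / (2 * real n)"
    using assms(4) by (simp add: power2_eq_square)
  finally have "1 - 1 / (2 * real n) \<le> measure_pmf.prob (Gnnp n p) (UNIV - (\<Union>t\<in>{m..n}. Bad t))"
    using measure_pmf.prob_compl[of "\<Union>t\<in>{m..n}. Bad t" "Gnnp n p"] by simp
  also have "UNIV - (\<Union>t\<in>{m..n}. Bad t)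
      = {Eg. \<forall>t\<in>{m..n}. real (card (mixed_indep n Eg t)) < 2 * real (n choose t) / real n}"
    by (auto simp: Bad_def not_le)
  finally show ?thesis .
qed

lemma prob_unimodal_log_concave_num_indep_ge:
  assumes "0 \<le> p" "p \<le> 1" "1 \<le> m" "1 \<le> n"
    and "6 * ln (real n) \<le> p * real m / 2"
  shows "1 - 1 / (2 * real n) \<le> measure_pmf.prob (Gnnp n p)
    {Eg. unimodal_range m n (n div 2) ((n + 1) div 2) (\<lambda>t. real (num_indep n Eg t))
       \<and> log_concave_range m n (\<lambda>t. real (num_indep n Eg t))}"
proof -
  have "{Eg. \<forall>t\<in>{m..n}. real (card (mixed_indep n Eg t)) < 2 * real (n choose t) / real n}
      \<subseteq> {Eg. unimodal_range m n (n div 2) ((n + 1) div 2) (\<lambda>t. real (num_indep n Eg t))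
           \<and> log_concave_range m n (\<lambda>t. real (num_indep n Eg t))}"
    using unimodal_log_concave_num_indep[OF assms(3)] by blast
  then have "measure_pmf.prob (Gnnp n p)
      {Eg. \<forall>t\<in>{m..n}. real (card (mixed_indep n Eg t)) < 2 * real (n choose t) / real n}
    \<le> measure_pmf.prob (Gnnp n p)
      {Eg. unimodal_range m n (n div 2) ((n + 1) div 2) (\<lambda>t. real (num_indep n Eg t))
         \<and> log_concave_range m n (\<lambda>t. real (num_indep n Eg t))}"
    by (rule measure_pmf.finite_measure_mono) simp
  with prob_few_mixed_indep_ge[OF assms] show ?thesis
    by linarith
qed

lemma eventually_ln_le_mult:
  fixes p :: "nat \<Rightarrow> real"
  assumes "filterlim (\<lambda>n. p n / sqrt (ln (real n) / real n)) at_top sequentially" "0 \<le> C"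
  shows "eventually (\<lambda>n. C * ln (real n) \<le> p n * real n) sequentially"
proof -
  have "eventually (\<lambda>n. C \<le> p n / sqrt (ln (real n) / real n)) sequentially"
    using assms(1) by (simp add: filterlim_at_top)
  moreover have "eventually (\<lambda>n. ln (real n) \<le> sqrt (ln (real n) / real n) * real n) sequentially"
    by real_asymp
  moreover have "eventually (\<lambda>n. 0 < sqrt (ln (real n) / real n)) sequentially"
    by real_asymp
  ultimately show ?thesis
  proof eventually_elim
    case (elim n)
    have "C * ln (real n) \<le> C * (sqrt (ln (real n) / real n) * real n)"
      using elim(2) assms(2) by (rule mult_left_mono)
    also have "\<dots> = (C * sqrt (ln (real n) / real n)) * real n"
      by (simp add: mult.assoc)
    also have "\<dots> \<le> p n * real n"
      using elim(1,3) by (intro mult_right_mono) (simp_all add: pos_le_divide_eq)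
    finally show ?case .
  qed
qed

lemma eventually_floor_mult_large:
  fixes p :: "nat \<Rightarrow> real"
  assumes "\<epsilon> > 0" "\<And>n. 0 \<le> p n"
    and "filterlim (\<lambda>n. p n / sqrt (ln (real n) / real n)) at_top sequentially"
  shows "eventually (\<lambda>n. 1 \<le> n \<and> 1 \<le> nat \<lfloor>\<epsilon> * real n\<rfloor>
    \<and> 6 * ln (real n) \<le> p n * real (nat \<lfloor>\<epsilon> * real n\<rfloor>) / 2) sequentially"
proof -
  have "eventually (\<lambda>n. 2 \<le> \<epsilon> * real n) sequentially"
    using filterlim_tendsto_pos_mult_at_top[OF tendsto_const assms(1) filterlim_real_sequentially]
    unfolding filterlim_at_top by blast
  moreover have "eventually (\<lambda>n. 24 / \<epsilon> * ln (real n) \<le> p n * real n) sequentially"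
    using assms(1) by (intro eventually_ln_le_mult[OF assms(3)]) simp
  moreover have "eventually (\<lambda>n. 1 \<le> n) sequentially"
    by (rule eventually_ge_at_top)
  ultimately show ?thesis
  proof eventually_elim
    case (elim n)
    define m where "m = nat \<lfloor>\<epsilon> * real n\<rfloor>"
    have "real m = of_int \<lfloor>\<epsilon> * real n\<rfloor>"
      using elim(1) by (simp add: m_def)
    then have m_ge: "\<epsilon> * real n / 2 \<le> real m"
      using elim(1) by linarith
    have "6 * ln (real n) = \<epsilon> / 4 * (24 / \<epsilon> * ln (real n))"
      using assms(1) by simp
    also have "\<dots> \<le> \<epsilon> / 4 * (p n * real n)"
      using elim(2) assms(1) by (intro mult_left_mono) simp_all
    also have "\<dots> = p n * (\<epsilon> * real n / 2) / 2"
      by (simp add: field_simps)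
    also have "\<dots> \<le> p n * real m / 2"
      using m_ge assms(2)[of n] by (intro divide_right_mono mult_left_mono) simp_all
    finally show ?case
      using m_ge elim(1,3) by (simp add: m_def)
  qed
qed

theorem mainTheorem2:
  fixes \<epsilon> :: real and p :: "nat \<Rightarrow> real"
  assumes "\<epsilon> > 0"
    and "\<And>n. 0 \<le> p n \<and> p n \<le> 1"
    and "filterlim (\<lambda>n. p n / sqrt (ln (real n) / real n)) at_top sequentially"
  shows "(\<lambda>n. measure_pmf.prob (Gnnp n (p n))
            {Eg. let m = nat \<lfloor>\<epsilon> * real n\<rfloor>; a = (\<lambda>t. real (num_indep n Eg t)) in
                 unimodal_range m n (n div 2) ((n + 1) div 2) a \<and> log_concave_range m n a})
         \<longlonglongrightarrow> 1"
proof -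
  define Good where "Good n = {Eg. let m = nat \<lfloor>\<epsilon> * real n\<rfloor>; a = (\<lambda>t. real (num_indep n Eg t)) in
                 unimodal_range m n (n div 2) ((n + 1) div 2) a \<and> log_concave_range m n a}" for n
  have "eventually (\<lambda>n. 1 - 1 / (2 * real n) \<le> measure_pmf.prob (Gnnp n (p n)) (Good n)) sequentially"
    using eventually_floor_mult_large[OF assms(1) conjunct1[OF assms(2)] assms(3)]
  proof eventually_elim
    case (elim n)
    then show ?case
      using prob_unimodal_log_concave_num_indep_ge[of "p n" "nat \<lfloor>\<epsilon> * real n\<rfloor>" n] assms(2)[of n]
      by (simp add: Good_def Let_def)
  qed
  moreover have "eventually (\<lambda>n. measure_pmf.prob (Gnnp n (p n)) (Good n) \<le> 1) sequentially"
    by (simp add: measure_pmf.prob_le_1)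
  moreover have "(\<lambda>n. 1 - 1 / (2 * real n)) \<longlonglongrightarrow> 1"
    by real_asymp
  ultimately have "(\<lambda>n. measure_pmf.prob (Gnnp n (p n)) (Good n)) \<longlonglongrightarrow> 1"
    by (rule tendsto_sandwich[OF _ _ _ tendsto_const])
  then show ?thesis
    by (simp add: Good_def)
qed

end
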